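(* Let $n\geq 2$ and let $(A,\cdot,[\cdot,\ldots,\cdot])$ be a transposed Poisson $n$-Lie algebra. Then $(A,\cdot,[\cdot,\ldots,\cdot])$ is simple if and only if the $n$-Lie algebra $(A,[\cdot,\ldots,\cdot])$ is simple.
   Context: An $n$-Lie algebra is a vector space $L$ with an $n$-linear skew-symmetric bracket satisfying $[[x_1,\ldots,x_n],y_2,\ldots,y_n]=\sum_{i=1}^n[x_1,\ldots,x_{i-1},[x_i,y_2,\ldots,y_n],x_{i+1},\ldots,x_n]$; an ideal is a subspace $I$ with $[I,A,\ldots,A]\subseteq I$, and it is simple if $[A,\ldots,A]\neq 0$ and its only ideals are $0$ and $A$. A transposed Poisson $n$-Lie algebra (over $\mathbb{C}$) is a triple $(A,\cdot,[\cdot,\ldots,\cdot])$ where $(A,\cdot)$ is commutative associative, $(A,[\cdot,\ldots,\cdot])$ is an $n$-Lie algebra, and $n\,h\,[a_1,\ldots,a_n]=\sum_{i=1}^n[a_1,\ldots,h a_i,\ldots,a_n]$ for all $h,a_i\in A$. An ideal of it is a subspace $J$ with $A\cdot J\subseteq J$ and $[J,A,\ldots,A]\subseteq J$; it is simple if $[A,\ldots,A]\neq 0$ and its only ideals are $0$ and $A$. *)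

theory Defs
  imports Complex_Main
begin

text \<open>An n-ary bracket is a function br on lists; only its values on lists of length n matter.
  Arguments are indexed 0..n-1.\<close>

definition multilinear_n :: "(complex \<Rightarrow> 'a::ab_group_add \<Rightarrow> 'a) \<Rightarrow> nat \<Rightarrow> ('a list \<Rightarrow> 'a) \<Rightarrow> bool" where
  "multilinear_n sc n br \<longleftrightarrow>
     (\<forall>xs i a b. length xs = n \<longrightarrow> i < n \<longrightarrow>
        br (xs[i := a + b]) = br (xs[i := a]) + br (xs[i := b])) \<and>
     (\<forall>xs i c a. length xs = n \<longrightarrow> i < n \<longrightarrow>
        br (xs[i := sc c a]) = sc c (br (xs[i := a])))"

definition skew_symmetric_n :: "nat \<Rightarrow> ('a::ab_group_add list \<Rightarrow> 'a) \<Rightarrow> bool" where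
  "skew_symmetric_n n br \<longleftrightarrow>
     (\<forall>xs i j. length xs = n \<longrightarrow> i < j \<longrightarrow> j < n \<longrightarrow>
        br (xs[i := xs ! j, j := xs ! i]) = - br xs)"

definition filippov_identity :: "nat \<Rightarrow> ('a::ab_group_add list \<Rightarrow> 'a) \<Rightarrow> bool" where
  "filippov_identity n br \<longleftrightarrow>
     (\<forall>xs ys. length xs = n \<longrightarrow> length ys = n - 1 \<longrightarrow>
        br (br xs # ys) = (\<Sum>i<n. br (xs[i := br ((xs ! i) # ys)])))"

definition n_Lie_algebra :: "(complex \<Rightarrow> 'a::ab_group_add \<Rightarrow> 'a) \<Rightarrow> nat \<Rightarrow> ('a list \<Rightarrow> 'a) \<Rightarrow> bool" where
  "n_Lie_algebra sc n br \<longleftrightarrow> vector_space sc \<and> multilinear_n sc n br \<and>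
     skew_symmetric_n n br \<and> filippov_identity n br"

definition n_Lie_ideal :: "(complex \<Rightarrow> 'a::ab_group_add \<Rightarrow> 'a) \<Rightarrow> nat \<Rightarrow> ('a list \<Rightarrow> 'a) \<Rightarrow> 'a set \<Rightarrow> bool" where
  "n_Lie_ideal sc n br I \<longleftrightarrow> module.subspace sc I \<and>
     (\<forall>x\<in>I. \<forall>ys. length ys = n - 1 \<longrightarrow> br (x # ys) \<in> I)"

definition nontrivial_bracket :: "nat \<Rightarrow> ('a::zero list \<Rightarrow> 'a) \<Rightarrow> bool" where
  "nontrivial_bracket n br \<longleftrightarrow> (\<exists>xs. length xs = n \<and> br xs \<noteq> 0)"

definition simple_n_Lie :: "(complex \<Rightarrow> 'a::ab_group_add \<Rightarrow> 'a) \<Rightarrow> nat \<Rightarrow> ('a list \<Rightarrow> 'a) \<Rightarrow> bool" where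
  "simple_n_Lie sc n br \<longleftrightarrow> nontrivial_bracket n br \<and>
     (\<forall>I. n_Lie_ideal sc n br I \<longrightarrow> I = {0} \<or> I = UNIV)"

text \<open>Commutative associative algebra over C: the type carries a commutative ring
  structure (no unit required), and the product is compatible with scalars
  (bilinearity then follows from distributivity and commutativity).\<close>
definition comm_assoc_algebra :: "(complex \<Rightarrow> 'a::comm_ring \<Rightarrow> 'a) \<Rightarrow> bool" where
  "comm_assoc_algebra sc \<longleftrightarrow> vector_space sc \<and> (\<forall>c a b. sc c (a * b) = sc c a * b)"

definition transposed_Poisson_n_Lie :: "(complex \<Rightarrow> 'a::comm_ring \<Rightarrow> 'a) \<Rightarrow> nat \<Rightarrow> ('a list \<Rightarrow> 'a) \<Rightarrow> bool" where
  "transposed_Poisson_n_Lie sc n br \<longleftrightarrow> comm_assoc_algebra sc \<and> n_Lie_algebra sc n br \<and>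
     (\<forall>h xs. length xs = n \<longrightarrow>
        sc (of_nat n) (h * br xs) = (\<Sum>i<n. br (xs[i := h * (xs ! i)])))"

definition TP_ideal :: "(complex \<Rightarrow> 'a::comm_ring \<Rightarrow> 'a) \<Rightarrow> nat \<Rightarrow> ('a list \<Rightarrow> 'a) \<Rightarrow> 'a set \<Rightarrow> bool" where
  "TP_ideal sc n br J \<longleftrightarrow> module.subspace sc J \<and> (\<forall>h. \<forall>x\<in>J. h * x \<in> J) \<and>
     (\<forall>x\<in>J. \<forall>ys. length ys = n - 1 \<longrightarrow> br (x # ys) \<in> J)"

definition simple_TP_n_Lie :: "(complex \<Rightarrow> 'a::comm_ring \<Rightarrow> 'a) \<Rightarrow> nat \<Rightarrow> ('a list \<Rightarrow> 'a) \<Rightarrow> bool" where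
  "simple_TP_n_Lie sc n br \<longleftrightarrow> nontrivial_bracket n br \<and>
     (\<forall>J. TP_ideal sc n br J \<longrightarrow> J = {0} \<or> J = UNIV)"

end

theory Submission
  imports Defs
begin

(* Every TP ideal is an n-Lie ideal, which gives one direction. Conversely, let A be TP-simple
   and I an n-Lie ideal. The span of all brackets is closed under multiplication by the TP
   identity, hence a nonzero TP ideal, hence A. Combining the Filippov and TP identities gives
   h [x, [z_1, ..., z_n], w_3, ..., w_n] \<in> I for x \<in> I, so by linearity in the second slot
   h [x, y_2, ..., y_n] \<in> I for all y. Thus K = {x \<in> I. h x \<in> I for all h} is a TP ideal: if K = A
   then I = A, and if K = 0 then [I, A, ..., A] \<subseteq> K = 0, so I lies in the centre, which is
   a proper TP ideal and therefore 0. *)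

lemma TP_ideal_imp_n_Lie_ideal: "TP_ideal sc n br J \<Longrightarrow> n_Lie_ideal sc n br J"
  unfolding TP_ideal_def n_Lie_ideal_def by blast

lemma simple_n_Lie_imp_simple_TP_n_Lie:
  "simple_n_Lie sc n br \<Longrightarrow> simple_TP_n_Lie sc n br"
  unfolding simple_n_Lie_def simple_TP_n_Lie_def using TP_ideal_imp_n_Lie_ideal by blast

context vector_space
begin

lemma subspace_scale_cancel:
  assumes "subspace S" "c \<noteq> 0" "c *s x \<in> S"
  shows "x \<in> S"
  using subspace_scale[OF assms(1,3), of "inverse c"] assms(2) by simp

lemma subspace_sum_remove:
  assumes "subspace S" "finite K" "k \<in> K" "\<And>j. j \<in> K \<Longrightarrow> j \<noteq> k \<Longrightarrow> f j \<in> S"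
  shows "sum f K - f k \<in> S"
proof -
  have "sum f K - f k = sum f (K - {k})"
    using assms(2,3) by (simp add: sum.remove)
  then show ?thesis
    using assms by (auto intro!: subspace_sum)
qed

end

definition n_Lie_center :: "nat \<Rightarrow> ('a::zero list \<Rightarrow> 'a) \<Rightarrow> 'a set" where
  "n_Lie_center n br = {x. \<forall>ys. length ys = n - 1 \<longrightarrow> br (x # ys) = 0}"

locale n_Lie_alg =
  fixes sc :: "complex \<Rightarrow> 'a::ab_group_add \<Rightarrow> 'a" and n :: nat and br :: "'a list \<Rightarrow> 'a"
  assumes n_Lie: "n_Lie_algebra sc n br"
begin

sublocale vector_space sc
  using n_Lie by (simp add: n_Lie_algebra_def)

lemma module_hom_bracket_update:
  assumes "length xs = n" "i < n"
  shows "module_hom sc sc (\<lambda>a. br (xs[i := a]))"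
  using n_Lie assms module_axioms
  by (auto simp: module_hom_iff n_Lie_algebra_def multilinear_n_def)

lemma bracket_swap:
  "length xs = n \<Longrightarrow> i < j \<Longrightarrow> j < n \<Longrightarrow> br (xs[i := xs ! j, j := xs ! i]) = - br xs"
  using n_Lie by (simp add: n_Lie_algebra_def skew_symmetric_n_def)

lemma bracket_filippov:
  "length xs = n \<Longrightarrow> length ys = n - 1 \<Longrightarrow>
     br (br xs # ys) = (\<Sum>i<n. br (xs[i := br (xs ! i # ys)]))"
  using n_Lie by (simp add: n_Lie_algebra_def filippov_identity_def)

lemma n_Lie_ideal_bracket_mem:
  assumes I: "n_Lie_ideal sc n br I" and L: "length L = n" "j < n" "L ! j \<in> I"
  shows "br L \<in> I"
proof -
  have bracket_head: "br M \<in> I" if "length M = n" "M ! 0 \<in> I" for M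
  proof -
    have "M = M ! 0 # tl M"
      using that L(2) by (cases M) auto
    then show ?thesis
      using I that by (metis length_tl n_Lie_ideal_def)
  qed
  show ?thesis
  proof (cases "j = 0")
    case True
    then show ?thesis using bracket_head L by simp
  next
    case False
    let ?M = "L[0 := L ! j, j := L ! 0]"
    have "br ?M \<in> I"
      using bracket_head[of ?M] L False by simp
    moreover have "br ?M = - br L"
      using bracket_swap[of L 0 j] L False by simp
    ultimately show ?thesis
      using I by (metis minus_minus n_Lie_ideal_def subspace_neg)
  qed
qed

end

locale TP_n_Lie_alg =
  fixes sc :: "complex \<Rightarrow> 'a::comm_ring \<Rightarrow> 'a" and n :: nat and br :: "'a list \<Rightarrow> 'a"
  assumes two_le_n: "2 \<le> n" and TP: "transposed_Poisson_n_Lie sc n br"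
begin

sublocale n_Lie_alg sc n br
  using TP by unfold_locales (simp add: transposed_Poisson_n_Lie_def)

lemma mult_scale_right: "h * sc c a = sc c (h * a)"
  using TP by (simp add: transposed_Poisson_n_Lie_def comm_assoc_algebra_def mult.commute)

lemma module_hom_mult: "module_hom sc sc ((*) h)"
  using module_axioms by (simp add: module_hom_iff distrib_left mult_scale_right)

lemma TP_identity:
  "length xs = n \<Longrightarrow> sc (of_nat n) (h * br xs) = (\<Sum>i<n. br (xs[i := h * xs ! i]))"
  using TP by (simp add: transposed_Poisson_n_Lie_def)

lemma of_nat_n_neq_0: "(of_nat n :: complex) \<noteq> 0"
  using two_le_n by simp

lemma of_nat_n_minus_1_neq_0: "(of_nat n - 1 :: complex) \<noteq> 0"
  using two_le_n by simp

lemma TP_identity_mod_ideal: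
  assumes I: "n_Lie_ideal sc n br I" and L: "length L = n" "k < n" "L ! k \<in> I"
  shows "sc (of_nat n) (h * br L) - br (L[k := h * L ! k]) \<in> I"
  unfolding TP_identity[OF L(1)]
proof (rule subspace_sum_remove)
  fix j assume "j \<in> {..<n}" "j \<noteq> k"
  then show "br (L[j := h * L ! j]) \<in> I"
    using n_Lie_ideal_bracket_mem[OF I, of "L[j := h * L ! j]" k] L by simp
qed (use I L in \<open>auto simp: n_Lie_ideal_def\<close>)

lemma bracket_bracket_mult_mem:
  assumes I: "n_Lie_ideal sc n br I" and x: "x \<in> I"
    and zs: "length zs = n" and ws: "length ws = n - 2"
  shows "br (br zs # h * x # ws) \<in> I"
proof -
  (* With E = [[zs], x, ws] and v = [[zs], h x, ws], the TP identity in the slot of x gives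
     n h E = v mod I; expanding E and v by Filippov and applying the TP identity to each
     summand gives n^2 h E = v mod I. Hence (n - 1) v \<in> I. *)
  define N where "N = (of_nat n :: complex)"
  define u where "u i = br (zs ! i # x # ws)" for i
  define w where "w i = br (zs ! i # h * x # ws)" for i
  define v where "v = br (br zs # h * x # ws)"
  have sI: "subspace I"
    using I by (simp add: n_Lie_ideal_def)
  have slot1: "sc N (h * br (a # x # ws)) - br (a # h * x # ws) \<in> I" for a
    using TP_identity_mod_ideal[OF I, of "a # x # ws" 1 h] x ws two_le_n
    unfolding N_def by simp
  have u: "u i \<in> I" if "i < n" for i
    using n_Lie_ideal_bracket_mem[OF I, of "zs ! i # x # ws" 1] x ws two_le_n
    unfolding u_def by simp
  have summand: "sc N (sc N (h * br (zs[i := u i]))) - br (zs[i := w i]) \<in> I" if i: "i < n" for i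
  proof -
    interpret slot: module_hom sc sc "\<lambda>a. br (zs[i := a])"
      using module_hom_bracket_update zs i .
    have "sc N (h * br (zs[i := u i])) - br (zs[i := h * u i]) \<in> I"
      using TP_identity_mod_ideal[OF I, of "zs[i := u i]" i h] zs i u[OF i]
      unfolding N_def by simp
    moreover have "br (zs[i := sc N (h * u i) - w i]) \<in> I"
      using n_Lie_ideal_bracket_mem[OF I, of "zs[i := sc N (h * u i) - w i]" i] slot1 zs i
      unfolding u_def w_def by simp
    ultimately have "sc N (sc N (h * br (zs[i := u i])) - br (zs[i := h * u i]))
        + br (zs[i := sc N (h * u i) - w i]) \<in> I"
      using sI by (simp add: subspace_add subspace_scale)
    then show ?thesis
      by (simp add: slot.diff slot.scale scale_right_diff_distrib del: scale_scale)
  qed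
  have filippov_u: "br (br zs # x # ws) = (\<Sum>i<n. br (zs[i := u i]))"
    using bracket_filippov[OF zs, of "x # ws"] ws two_le_n unfolding u_def by simp
  have filippov_w: "v = (\<Sum>i<n. br (zs[i := w i]))"
    using bracket_filippov[OF zs, of "h * x # ws"] ws two_le_n unfolding v_def w_def by simp
  have "sc N (sc N (h * br (br zs # x # ws))) - v
      = (\<Sum>i<n. sc N (sc N (h * br (zs[i := u i]))) - br (zs[i := w i]))"
    unfolding filippov_u filippov_w
    by (simp add: sum_distrib_left scale_sum_right sum_subtractf del: scale_scale)
  also have "\<dots> \<in> I"
    using summand by (auto intro: subspace_sum[OF sI])
  finally have "sc N (sc N (h * br (br zs # x # ws))) - v \<in> I" .
  moreover have "sc N (sc N (h * br (br zs # x # ws)) - v) \<in> I"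
    using subspace_scale[OF sI slot1] unfolding v_def .
  ultimately have "sc (N - 1) v \<in> I"
    using subspace_diff[OF sI]
    by (fastforce simp: scale_left_diff_distrib scale_right_diff_distrib simp del: scale_scale)
  then show ?thesis
    using subspace_scale_cancel[OF sI] of_nat_n_minus_1_neq_0 unfolding N_def v_def by blast
qed

lemma mult_bracket_bracket_mem:
  assumes I: "n_Lie_ideal sc n br I" and x: "x \<in> I"
    and zs: "length zs = n" and ws: "length ws = n - 2"
  shows "h * br (x # br zs # ws) \<in> I"
proof -
  have sI: "subspace I"
    using I by (simp add: n_Lie_ideal_def)
  have "br (h * x # br zs # ws) = - br (br zs # h * x # ws)"
    using bracket_swap[of "br zs # h * x # ws" 0 1] ws two_le_n by simp
  then have "br (h * x # br zs # ws) \<in> I"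
    using subspace_neg[OF sI bracket_bracket_mult_mem[OF I x zs ws]] by simp
  moreover have "sc (of_nat n) (h * br (x # br zs # ws)) - br (h * x # br zs # ws) \<in> I"
    using TP_identity_mod_ideal[OF I, of "x # br zs # ws" 0 h] x ws two_le_n by simp
  ultimately have "sc (of_nat n) (h * br (x # br zs # ws)) \<in> I"
    using subspace_add[OF sI] by fastforce
  then show ?thesis
    using subspace_scale_cancel[OF sI] of_nat_n_neq_0 by blast
qed

lemma span_brackets_eq_UNIV:
  assumes simple: "simple_TP_n_Lie sc n br"
  shows "span {br zs | zs. length zs = n} = UNIV"
proof -
  let ?B = "{br zs | zs. length zs = n}"
  have mult_bracket: "h * br zs \<in> span ?B" if zs: "length zs = n" for h zs
  proof -
    have "sc (of_nat n) (h * br zs) \<in> span ?B"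
      unfolding TP_identity[OF zs] by (rule span_sum) (auto intro!: span_base simp: zs)
    then show ?thesis
      using subspace_scale_cancel[OF subspace_span] of_nat_n_neq_0 by blast
  qed
  have "?B \<subseteq> (\<Inter>h. {s. h * s \<in> span ?B})"
    using mult_bracket by auto
  moreover have "subspace {s. h * s \<in> span ?B}" for h
    by (rule module_hom.subspace_linear_preimage[OF module_hom_mult subspace_span])
  then have "subspace (\<Inter>h. {s. h * s \<in> span ?B})"
    by (rule subspace_Int)
  ultimately have "span ?B \<subseteq> (\<Inter>h. {s. h * s \<in> span ?B})"
    by (rule span_minimal)
  then have "h * s \<in> span ?B" if "s \<in> span ?B" for h s
    using that by blast
  moreover have "br (s # ys) \<in> span ?B" if "length ys = n - 1" for s ys
    using that two_le_n by (intro span_base) (auto intro!: exI[of _ "s # ys"])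
  ultimately have "TP_ideal sc n br (span ?B)"
    unfolding TP_ideal_def by auto
  moreover obtain xs where "length xs = n" "br xs \<noteq> 0"
    using simple by (auto simp: simple_TP_n_Lie_def nontrivial_bracket_def)
  then have "br xs \<in> span ?B" "br xs \<noteq> 0"
    by (auto intro: span_base)
  then have "span ?B \<noteq> {0}"
    by auto
  ultimately show ?thesis
    using simple by (auto simp: simple_TP_n_Lie_def)
qed

lemma mult_bracket_mem:
  assumes simple: "simple_TP_n_Lie sc n br" and I: "n_Lie_ideal sc n br I"
    and x: "x \<in> I" and ys: "length ys = n - 1"
  shows "h * br (x # ys) \<in> I"
proof -
  obtain a ws where ys_eq: "ys = a # ws" and ws: "length ws = n - 2"
    using ys two_le_n by (cases ys) auto
  have "module_hom sc sc ((*) h \<circ> (\<lambda>b. br ((x # 0 # ws)[1 := b])))"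
    by (rule module_hom_compose[OF module_hom_bracket_update module_hom_mult])
      (use ws two_le_n in simp_all)
  from module_hom.subspace_linear_preimage[OF this, of I]
  have "subspace {a. h * br (x # a # ws) \<in> I}"
    using I by (simp add: n_Lie_ideal_def)
  moreover have "{br zs | zs. length zs = n} \<subseteq> {a. h * br (x # a # ws) \<in> I}"
    using mult_bracket_bracket_mem[OF I x _ ws] by blast
  ultimately have "span {br zs | zs. length zs = n} \<subseteq> {a. h * br (x # a # ws) \<in> I}"
    by (rule span_minimal[rotated])
  then show ?thesis
    unfolding span_brackets_eq_UNIV[OF simple] ys_eq by blast
qed

lemma TP_ideal_mult_closed_part:
  assumes simple: "simple_TP_n_Lie sc n br" and I: "n_Lie_ideal sc n br I"
  shows "TP_ideal sc n br {x \<in> I. \<forall>h. h * x \<in> I}"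
proof -
  have sI: "subspace I"
    using I by (simp add: n_Lie_ideal_def)
  have "subspace {x \<in> I. \<forall>h. h * x \<in> I}"
    unfolding subspace_def
    using subspace_0[OF sI] subspace_add[OF sI] subspace_scale[OF sI]
    by (auto simp: distrib_left mult_scale_right)
  moreover have "h * (k * x) \<in> I" if "\<forall>h. h * x \<in> I" for h k x
    using that by (metis mult.assoc)
  moreover have "br (x # ys) \<in> I" if "x \<in> I" "length ys = n - 1" for x ys
    using I that by (simp add: n_Lie_ideal_def)
  ultimately show ?thesis
    unfolding TP_ideal_def using mult_bracket_mem[OF simple I] by auto
qed

lemma bracket_zero_head: "length ys = n - 1 \<Longrightarrow> br (0 # ys) = 0"
  using module_hom.zero[OF module_hom_bracket_update[of "0 # ys" 0]] two_le_n by simp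

lemma TP_ideal_center: "TP_ideal sc n br (n_Lie_center n br)"
proof -
  have "subspace {x. br (x # ys) = 0}" if "length ys = n - 1" for ys
    using module_hom.subspace_kernel[OF module_hom_bracket_update[of "0 # ys" 0]]
      that two_le_n by simp
  then have "subspace (\<Inter>ys\<in>{ys. length ys = n - 1}. {x. br (x # ys) = 0})"
    by (rule subspace_Int) simp
  moreover have "n_Lie_center n br = (\<Inter>ys\<in>{ys. length ys = n - 1}. {x. br (x # ys) = 0})"
    by (auto simp: n_Lie_center_def)
  ultimately have "subspace (n_Lie_center n br)"
    by simp
  moreover have "br (h * x # ys) = 0" if "x \<in> n_Lie_center n br" "length ys = n - 1" for h x ys
  proof -
    obtain m where m: "n = Suc m"
      using two_le_n by (cases n) auto
    have "0 = sc (of_nat n) (h * br (x # ys))"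
      using that by (simp add: n_Lie_center_def)
    also have "\<dots> = (\<Sum>i<n. br ((x # ys)[i := h * (x # ys) ! i]))"
      using TP_identity that two_le_n by simp
    also have "\<dots> = br (h * x # ys) + (\<Sum>i<m. br (x # ys[i := h * ys ! i]))"
      unfolding m sum.lessThan_Suc_shift by simp
    also have "(\<Sum>i<m. br (x # ys[i := h * ys ! i])) = 0"
      using that by (simp add: n_Lie_center_def)
    finally show ?thesis
      by simp
  qed
  ultimately show ?thesis
    unfolding TP_ideal_def by (auto simp: n_Lie_center_def bracket_zero_head)
qed

lemma n_Lie_center_eq_0:
  assumes simple: "simple_TP_n_Lie sc n br"
  shows "n_Lie_center n br = {0}"
proof -
  obtain a ys where "br (a # ys) \<noteq> 0" "length ys = n - 1"
    using simple unfolding simple_TP_n_Lie_def nontrivial_bracket_def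
    by (metis Suc_diff_1 length_Suc_conv two_le_n not_numeral_le_zero not_gr0)
  then have "a \<notin> n_Lie_center n br"
    by (auto simp: n_Lie_center_def)
  then show ?thesis
    using simple TP_ideal_center by (auto simp: simple_TP_n_Lie_def)
qed

lemma simple_TP_n_Lie_imp_simple_n_Lie:
  assumes simple: "simple_TP_n_Lie sc n br"
  shows "simple_n_Lie sc n br"
proof -
  have "I = {0} \<or> I = UNIV" if I: "n_Lie_ideal sc n br I" for I
  proof -
    let ?K = "{x \<in> I. \<forall>h. h * x \<in> I}"
    have "?K = {0} \<or> ?K = UNIV"
      using TP_ideal_mult_closed_part[OF simple I] simple by (simp add: simple_TP_n_Lie_def)
    then show ?thesis
    proof
      assume "?K = {0}"
      then have "I \<subseteq> n_Lie_center n br"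
        using I mult_bracket_mem[OF simple I] by (fastforce simp: n_Lie_center_def n_Lie_ideal_def)
      then show ?thesis
        using n_Lie_center_eq_0[OF simple] I by (auto simp: n_Lie_ideal_def subspace_0)
    qed blast
  qed
  then show ?thesis
    using simple by (simp add: simple_n_Lie_def simple_TP_n_Lie_def)
qed

end

theorem mainTheorem7:
  fixes sc :: "complex \<Rightarrow> 'a::comm_ring \<Rightarrow> 'a" and n :: nat and br :: "'a list \<Rightarrow> 'a"
  assumes "n \<ge> 2"
    and "transposed_Poisson_n_Lie sc n br"
  shows "simple_TP_n_Lie sc n br \<longleftrightarrow> simple_n_Lie sc n br"
proof -
  interpret TP_n_Lie_alg sc n br
    using assms by unfold_locales
  show ?thesis
    using simple_TP_n_Lie_imp_simple_n_Lie simple_n_Lie_imp_simple_TP_n_Lie by blast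
qed

end
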